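(* In the model described in the context, the order process $q_t$ has variance not depending on $t$, and the bullwhip measure satisfies $$ BM=\frac{\operatorname{Var} q_t}{\operatorname{Var} D_t} =\frac{2\sigma_L^2}{n^2m^2}\left(m(1-\rho^n)+\frac{n(1+\rho)}{1-\rho}-\frac{(1+\rho^2)(1-\rho^n)}{(1-\rho)^2}\right)+\frac{2\sigma_L^2\mu_D^2}{\sigma_D^2 m^2}+\left(\frac{2\mu_L^2}{n^2}+\frac{2\mu_L}{n}\right)(1-\rho^n)+1 . $$
   Context: Model. Fix $\mu_D\in\mathbb{R}$, $\rho\in(-1,1)$, and an i.i.d. sequence $(\epsilon_t)_{t\in\mathbb{Z}}$ with $E\epsilon_t=0$, $\operatorname{Var}\epsilon_t=\sigma^2\in(0,\infty)$. The demand $(D_t)_{t\in\mathbb{Z}}$ is the stationary AR(1) process $D_t=\mu_D+\rho(D_{t-1}-\mu_D)+\epsilon_t$; thus $E D_t=\mu_D$ and $\sigma_D^2:=\operatorname{Var}D_t=\sigma^2/(1-\rho^2)$. Fix an integer $L^+\ge 0$. The lead times $(L_t)_{t\in\mathbb{Z}}$ are i.i.d. random variables with values in $\{0,1,\dots,L^+\}$, mean $\mu_L$ and variance $\sigma_L^2$, and the sequence $(L_t)$ is independent of $(\epsilon_t)$ (hence of $(D_t)$). Fix integers $n,m\ge 1$. Forecasts: $\widehat{D}_t=\frac1n\sum_{i=1}^n D_{t-i}$, $\widehat{L}_t=\frac1m\sum_{i=1}^m L_{t-i-L^+}$, and the lead-time-demand forecast $\widehat{D^L_t}=\widehat{L}_t\widehat{D}_t$.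 The order-up-to level is $S_t=\widehat{D^L_t}+\mathit{TNS}$ with $\mathit{TNS}$ a constant not depending on $t$, and the order placed in period $t$ is $q_t=S_t-S_{t-1}+D_{t-1}$, i.e. $q_t=\widehat{L}_t\widehat{D}_t-\widehat{L}_{t-1}\widehat{D}_{t-1}+D_{t-1}$. The bullwhip measure is $BM=\operatorname{Var}q_t/\operatorname{Var}D_t$. *)

theory Defs
  imports "HOL-Probability.Probability"
begin

definition D_hat :: "nat \<Rightarrow> (int \<Rightarrow> 'a \<Rightarrow> real) \<Rightarrow> int \<Rightarrow> 'a \<Rightarrow> real" where
  "D_hat n D t \<omega> = (1 / real n) * (\<Sum>i\<in>{1..n}. D (t - int i) \<omega>)"

definition L_hat :: "nat \<Rightarrow> nat \<Rightarrow> (int \<Rightarrow> 'a \<Rightarrow> nat) \<Rightarrow> int \<Rightarrow> 'a \<Rightarrow> real" where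
  "L_hat m Lplus L t \<omega> = (1 / real m) * (\<Sum>i\<in>{1..m}. real (L (t - int i - int Lplus) \<omega>))"

definition order_up_to ::
  "nat \<Rightarrow> nat \<Rightarrow> nat \<Rightarrow> real \<Rightarrow> (int \<Rightarrow> 'a \<Rightarrow> real) \<Rightarrow> (int \<Rightarrow> 'a \<Rightarrow> nat) \<Rightarrow> int \<Rightarrow> 'a \<Rightarrow> real" where
  "order_up_to n m Lplus TNS D L t \<omega> = L_hat m Lplus L t \<omega> * D_hat n D t \<omega> + TNS"

definition order_qty ::
  "nat \<Rightarrow> nat \<Rightarrow> nat \<Rightarrow> real \<Rightarrow> (int \<Rightarrow> 'a \<Rightarrow> real) \<Rightarrow> (int \<Rightarrow> 'a \<Rightarrow> nat) \<Rightarrow> int \<Rightarrow> 'a \<Rightarrow> real" where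
  "order_qty n m Lplus TNS D L t \<omega> =
     order_up_to n m Lplus TNS D L t \<omega> - order_up_to n m Lplus TNS D L (t - 1) \<omega> + D (t - 1) \<omega>"

definition (in prob_space) stationary_AR1 ::
  "real \<Rightarrow> real \<Rightarrow> (int \<Rightarrow> 'a \<Rightarrow> real) \<Rightarrow> (int \<Rightarrow> 'a \<Rightarrow> real) \<Rightarrow> bool" where
  "stationary_AR1 muD rho eps D \<longleftrightarrow>
     (\<forall>t. D t \<in> borel_measurable M) \<and>
     (\<forall>t. integrable M (\<lambda>\<omega>. (D t \<omega>)\<^sup>2)) \<and>
     (\<forall>t. \<forall>\<omega>\<in>space M. D t \<omega> = muD + rho * (D (t - 1) \<omega> - muD) + eps t \<omega>) \<and>
     (\<forall>t. expectation (D t) = expectation (D 0)) \<and>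
     (\<forall>t h. expectation (\<lambda>\<omega>. D (t + h) \<omega> * D t \<omega>) = expectation (\<lambda>\<omega>. D h \<omega> * D 0 \<omega>))"

end

theory Submission
  imports Defs
begin

text \<open>Write \<open>L_hat t = \<mu>\<^sub>L + A t\<close> and \<open>D_hat t = \<mu>\<^sub>D + B t\<close>. Then
  \<open>q t - \<mu>\<^sub>D = \<mu>\<^sub>D (A t - A (t-1)) + W t + A t B t - A (t-1) B (t-1)\<close> with
  \<open>W t = \<mu>\<^sub>L (B t - B (t-1)) + (D (t-1) - \<mu>\<^sub>D)\<close> (\<open>L_hat_err\<close>, \<open>D_hat_err\<close> and
  \<open>fixed_lead_order_dev\<close> below). Every summand is a product of a bounded function of
  the lead times and a square integrable function of the demand; since these two families are
  independent, the second moment of the sum factorises into lead-time moments times demand moments.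
  The lead-time moments are those of a moving average of i.i.d. variables; the demand moments follow
  from the AR(1) autocovariance \<open>\<rho>\<^sup>k \<sigma>\<^sub>D\<^sup>2\<close>. None of them depends on \<open>t\<close>, and collecting terms gives
  the bullwhip formula.\<close>

lemma integrable_mult_of_square_integrable:
  fixes f g :: "'a \<Rightarrow> real"
  assumes [measurable]: "f \<in> borel_measurable M" "g \<in> borel_measurable M"
    and "integrable M (\<lambda>x. (f x)\<^sup>2)" "integrable M (\<lambda>x. (g x)\<^sup>2)"
  shows "integrable M (\<lambda>x. f x * g x)"
proof (rule Bochner_Integration.integrable_bound[where f = "\<lambda>x. (f x)\<^sup>2 + (g x)\<^sup>2"])
  show "integrable M (\<lambda>x. (f x)\<^sup>2 + (g x)\<^sup>2)"
    using assms by auto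
  show "AE x in M. norm (f x * g x) \<le> norm ((f x)\<^sup>2 + (g x)\<^sup>2)"
  proof (rule AE_I2)
    fix x
    have "2 * \<bar>f x\<bar> * \<bar>g x\<bar> \<le> \<bar>f x\<bar>\<^sup>2 + \<bar>g x\<bar>\<^sup>2"
      by (rule sum_squares_bound)
    moreover have "0 \<le> \<bar>f x\<bar> * \<bar>g x\<bar>"
      by simp
    ultimately have "\<bar>f x * g x\<bar> \<le> (f x)\<^sup>2 + (g x)\<^sup>2"
      unfolding abs_mult power2_abs by linarith
    then show "norm (f x * g x) \<le> norm ((f x)\<^sup>2 + (g x)\<^sup>2)"
      by simp
  qed
qed simp

lemma integral_lincomb_square:
  fixes P Q :: "'a \<Rightarrow> real" and a b :: real
  assumes "integrable M (\<lambda>x. P x * P x)" "integrable M (\<lambda>x. P x * Q x)"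
    "integrable M (\<lambda>x. Q x * Q x)"
  shows "(\<integral>x. (a * P x + b * Q x) * (a * P x + b * Q x) \<partial>M)
    = a * a * (\<integral>x. P x * P x \<partial>M) + 2 * a * b * (\<integral>x. P x * Q x \<partial>M)
      + b * b * (\<integral>x. Q x * Q x \<partial>M)"
proof -
  have "(\<integral>x. (a * P x + b * Q x) * (a * P x + b * Q x) \<partial>M)
     = (\<integral>x. (a * a) * (P x * P x) + (2 * a * b) * (P x * Q x) + (b * b) * (Q x * Q x) \<partial>M)"
    by (rule Bochner_Integration.integral_cong) (auto simp: algebra_simps)
  then show ?thesis
    using assms by simp
qed

lemma integral_mult_polarization:
  fixes P Q :: "'a \<Rightarrow> real"
  assumes "integrable M (\<lambda>x. P x * P x)" "integrable M (\<lambda>x. P x * Q x)"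
    "integrable M (\<lambda>x. Q x * Q x)"
  shows "(\<integral>x. P x * Q x \<partial>M) = ((\<integral>x. P x * P x \<partial>M) + (\<integral>x. Q x * Q x \<partial>M)
    - (\<integral>x. (P x - Q x) * (P x - Q x) \<partial>M)) / 2"
  using integral_lincomb_square[OF assms, of 1 "-1"] by simp

lemma integral_comp_eq_if_distr_eq:
  fixes g :: "'b \<Rightarrow> real"
  assumes "distr M N X = distr M N Y" "X \<in> measurable M N" "Y \<in> measurable M N"
    "g \<in> borel_measurable N"
  shows "(\<integral>\<omega>. g (X \<omega>) \<partial>M) = (\<integral>\<omega>. g (Y \<omega>) \<partial>M)"
  using assms by (simp add: integral_distr[symmetric])

lemma (in prob_space) indep_set_integral_mult:
  fixes X Y :: "'a \<Rightarrow> real"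
  assumes indep: "indep_set (sets F) (sets G)"
    and space: "space F = space M" "space G = space M"
    and X: "X \<in> borel_measurable F" and Y: "Y \<in> borel_measurable G"
    and iX: "integrable M X" and iY: "integrable M Y"
  shows "integrable M (\<lambda>\<omega>. X \<omega> * Y \<omega>)"
    and "expectation (\<lambda>\<omega>. X \<omega> * Y \<omega>) = expectation X * expectation Y"
proof -
  have sub: "sigma_sets (space M) {Z -` A \<inter> space M | A. A \<in> sets borel} \<subseteq> sets H"
    if "Z \<in> borel_measurable H" "space H = space M" for Z :: "'a \<Rightarrow> real" and H
  proof -
    have "{Z -` A \<inter> space M | A. A \<in> sets borel} \<subseteq> sets H"
      using measurable_sets[OF that(1)] that(2) by auto
    then show ?thesis
      using sigma_algebra.sigma_sets_subset[OF sets.sigma_algebra_axioms[of H]] that(2) by simp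
  qed
  have "indep_var borel X borel Y"
    unfolding indep_var_eq
  proof (intro conjI)
    show "random_variable borel X" "random_variable borel Y"
      using iX iY by auto
    show "indep_set (sigma_sets (space M) {X -` A \<inter> space M |A. A \<in> sets borel})
        (sigma_sets (space M) {Y -` A \<inter> space M |A. A \<in> sets borel})"
      using indep_sets_mono_sets[OF indep[unfolded indep_set_def]] sub[OF X space(1)]
        sub[OF Y space(2)]
      unfolding indep_set_def by (simp split: bool.split)
  qed
  then show "integrable M (\<lambda>\<omega>. X \<omega> * Y \<omega>)"
    and "expectation (\<lambda>\<omega>. X \<omega> * Y \<omega>) = expectation X * expectation Y"
    using indep_var_integrable indep_var_lebesgue_integral iX iY by auto
qed

lemma (in prob_space) indep_vars_integral_mult:
  fixes X :: "'i \<Rightarrow> 'a \<Rightarrow> real"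
  assumes "indep_vars (\<lambda>_. borel) X I" "i \<in> I" "j \<in> I" "i \<noteq> j"
    and "integrable M (X i)" "integrable M (X j)"
  shows "expectation (\<lambda>\<omega>. X i \<omega> * X j \<omega>) = expectation (X i) * expectation (X j)"
proof -
  have "{i, j} \<subseteq> I"
    using assms(2,3) by simp
  with assms(1) have "indep_vars (\<lambda>_. borel) X {i, j}"
    by (rule indep_vars_subset)
  moreover have "integrable M (X k)" if "k \<in> {i, j}" for k
    using that assms(5,6) by blast
  ultimately have "expectation (\<lambda>\<omega>. \<Prod>k\<in>{i, j}. X k \<omega>) = (\<Prod>k\<in>{i, j}. expectation (X k))"
    by (intro indep_vars_lebesgue_integral) simp_all
  then show ?thesis
    using assms(4) by simp
qed

lemma moving_sum_diff:
  fixes f :: "int \<Rightarrow> 'b :: ab_group_add"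
  shows "(\<Sum>i\<in>{1..k}. f (t - int i)) - (\<Sum>i\<in>{1..k}. f (t - 1 - int i))
    = f (t - 1) - f (t - 1 - int k)"
proof (induction k)
  case (Suc k)
  have "t - int (Suc k) = t - 1 - int k"
    by simp
  then show ?case
    using Suc by (simp add: sum.cl_ivl_Suc algebra_simps)
qed simp

lemma geometric_sum_reversed:
  fixes r :: "'b :: field"
  assumes "r \<noteq> 1"
  shows "(\<Sum>i\<in>{1..k}. r ^ (k + 1 - i)) = r * (1 - r ^ k) / (1 - r)"
proof (induction k)
  case (Suc k)
  have "(\<Sum>i\<in>{1..k}. r ^ (Suc k + 1 - i)) = (\<Sum>i\<in>{1..k}. r * r ^ (k + 1 - i))"
    by (intro sum.cong refl) (simp add: Suc_diff_le)
  then have "(\<Sum>i\<in>{1..Suc k}. r ^ (Suc k + 1 - i)) = r * (\<Sum>i\<in>{1..k}. r ^ (k + 1 - i)) + r"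
    by (simp add: sum.cl_ivl_Suc sum_distrib_left)
  also have "\<dots> = r * (r * (1 - r ^ k) / (1 - r)) + r"
    by (simp only: Suc.IH)
  also have "\<dots> = r * (1 - r ^ Suc k) / (1 - r)"
    using assms by (simp add: field_simps)
  finally show ?case .
qed simp

locale bullwhip_model = prob_space +
  fixes eps D :: "int \<Rightarrow> 'a \<Rightarrow> real"
    and L :: "int \<Rightarrow> 'a \<Rightarrow> nat"
    and muD rho sigma2 muL sigmaL2 :: real
    and Lplus n m :: nat
  assumes rho: "-1 < rho" "rho < 1"
    and eps_borel[measurable]: "\<And>t. eps t \<in> borel_measurable M"
    and eps_square_integrable: "\<And>t. integrable M (\<lambda>\<omega>. (eps t \<omega>)\<^sup>2)"
    and eps_mean: "\<And>t. expectation (eps t) = 0"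
    and eps_variance: "\<And>t. variance (eps t) = sigma2"
    and sigma2_pos: "0 < sigma2"
    and L_measurable[measurable]: "\<And>t. L t \<in> measurable M (count_space UNIV)"
    and L_bounded: "\<And>t \<omega>. \<omega> \<in> space M \<Longrightarrow> L t \<omega> \<le> Lplus"
    and L_distr: "\<And>t. distr M (count_space UNIV) (L t) = distr M (count_space UNIV) (L 0)"
    and L_mean: "expectation (\<lambda>\<omega>. real (L 0 \<omega>)) = muL"
    and L_variance: "variance (\<lambda>\<omega>. real (L 0 \<omega>)) = sigmaL2"
    and indep_eps_L: "indep_vars (\<lambda>_. borel)
                  (\<lambda>i \<omega>. case i of Inl t \<Rightarrow> eps t \<omega> | Inr t \<Rightarrow> real (L t \<omega>)) UNIV"
    and indep_L_demand: "indep_set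
          (sigma_sets (space M) (\<Union>t. {(\<lambda>\<omega>. real (L t \<omega>)) -` A \<inter> space M | A. A \<in> sets borel}))
          (sigma_sets (space M) ((\<Union>t. {eps t -` A \<inter> space M | A. A \<in> sets borel})
                                  \<union> (\<Union>t. {D t -` A \<inter> space M | A. A \<in> sets borel})))"
    and AR1: "stationary_AR1 muD rho eps D"
    and n: "n \<ge> 1" and m: "m \<ge> 1"
begin

lemma D_borel[measurable]: "D t \<in> borel_measurable M"
  using AR1 unfolding stationary_AR1_def by blast

lemma D_square_integrable: "integrable M (\<lambda>\<omega>. (D t \<omega>)\<^sup>2)"
  using AR1 unfolding stationary_AR1_def by blast

lemma D_recursion: "\<omega> \<in> space M \<Longrightarrow> D t \<omega> = muD + rho * (D (t - 1) \<omega> - muD) + eps t \<omega>"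
  using AR1 unfolding stationary_AR1_def by blast

lemma D_expectation_shift: "expectation (D t) = expectation (D 0)"
  using AR1 unfolding stationary_AR1_def by blast

lemma D_second_moment_shift:
  "expectation (\<lambda>\<omega>. D t \<omega> * D t \<omega>) = expectation (\<lambda>\<omega>. D 0 \<omega> * D 0 \<omega>)"
proof -
  have "\<forall>t h. expectation (\<lambda>\<omega>. D (t + h) \<omega> * D t \<omega>) = expectation (\<lambda>\<omega>. D h \<omega> * D 0 \<omega>)"
    using AR1 unfolding stationary_AR1_def by blast
  from this[rule_format, of t 0] show ?thesis
    by simp
qed

lemma L_real_borel[measurable]: "(\<lambda>\<omega>. real (L t \<omega>)) \<in> borel_measurable M"
  by (rule measurable_compose[OF L_measurable]) simp

subsection \<open>Lead-time and demand random variables\<close>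

definition lead_time_algebra :: "'a measure" where
  "lead_time_algebra =
     sigma (space M) (\<Union>t. {(\<lambda>\<omega>. real (L t \<omega>)) -` A \<inter> space M | A. A \<in> sets borel})"

definition demand_algebra :: "'a measure" where
  "demand_algebra = sigma (space M) ((\<Union>t. {eps t -` A \<inter> space M | A. A \<in> sets borel})
                                      \<union> (\<Union>t. {D t -` A \<inter> space M | A. A \<in> sets borel}))"

lemma space_lead_time_algebra: "space lead_time_algebra = space M"
  unfolding lead_time_algebra_def by (rule space_measure_of) auto

lemma space_demand_algebra: "space demand_algebra = space M"
  unfolding demand_algebra_def by (rule space_measure_of) auto

lemma sets_lead_time_algebra:
  "sets lead_time_algebra =
     sigma_sets (space M) (\<Union>t. {(\<lambda>\<omega>. real (L t \<omega>)) -` A \<inter> space M | A. A \<in> sets borel})"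
  unfolding lead_time_algebra_def by (rule sets_measure_of) auto

lemma sets_demand_algebra:
  "sets demand_algebra = sigma_sets (space M) ((\<Union>t. {eps t -` A \<inter> space M | A. A \<in> sets borel})
                                      \<union> (\<Union>t. {D t -` A \<inter> space M | A. A \<in> sets borel}))"
  unfolding demand_algebra_def by (rule sets_measure_of) auto

lemma L_lead_time_algebra[measurable]: "(\<lambda>\<omega>. real (L t \<omega>)) \<in> borel_measurable lead_time_algebra"
  by (rule measurableI) (auto simp: space_lead_time_algebra sets_lead_time_algebra)

lemma D_demand_algebra[measurable]: "D t \<in> borel_measurable demand_algebra"
  by (rule measurableI) (auto simp: space_demand_algebra sets_demand_algebra)

lemma eps_demand_algebra[measurable]: "eps t \<in> borel_measurable demand_algebra"
  by (rule measurableI) (auto simp: space_demand_algebra sets_demand_algebra)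

lemma subalgebra_lead_time_algebra: "subalgebra M lead_time_algebra"
  unfolding subalgebra_def space_lead_time_algebra sets_lead_time_algebra
  by (auto intro!: sets.sigma_sets_subset measurable_sets[OF L_real_borel])

lemma subalgebra_demand_algebra: "subalgebra M demand_algebra"
  unfolding subalgebra_def space_demand_algebra sets_demand_algebra
  by (auto intro!: sets.sigma_sets_subset)

definition lead_time_rv :: "('a \<Rightarrow> real) \<Rightarrow> bool" where
  "lead_time_rv X \<longleftrightarrow> X \<in> borel_measurable lead_time_algebra \<and> (\<exists>B. \<forall>\<omega>\<in>space M. \<bar>X \<omega>\<bar> \<le> B)"

definition demand_rv :: "('a \<Rightarrow> real) \<Rightarrow> bool" where
  "demand_rv Y \<longleftrightarrow> Y \<in> borel_measurable demand_algebra \<and> integrable M (\<lambda>\<omega>. (Y \<omega>)\<^sup>2)"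

lemma lead_time_rv_integrable:
  assumes "lead_time_rv X"
  shows "integrable M X"
proof -
  obtain B where "X \<in> borel_measurable lead_time_algebra" "\<forall>\<omega>\<in>space M. \<bar>X \<omega>\<bar> \<le> B"
    using assms unfolding lead_time_rv_def by blast
  then show ?thesis
    using measurable_from_subalg[OF subalgebra_lead_time_algebra]
    by (intro integrable_const_bound[where B = B]) auto
qed

lemma demand_rv_borel: "demand_rv Y \<Longrightarrow> Y \<in> borel_measurable M"
  unfolding demand_rv_def
  using measurable_from_subalg[OF subalgebra_demand_algebra] by blast

lemma demand_rv_integrable_mult: "demand_rv Y \<Longrightarrow> demand_rv Z \<Longrightarrow> integrable M (\<lambda>\<omega>. Y \<omega> * Z \<omega>)"
  using integrable_mult_of_square_integrable demand_rv_borel unfolding demand_rv_def by blast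

lemma demand_rv_integrable: "demand_rv Y \<Longrightarrow> integrable M Y"
  using demand_rv_integrable_mult[of Y "\<lambda>_. 1"] unfolding demand_rv_def by simp

lemma lead_time_rv_const: "lead_time_rv (\<lambda>_. c)"
  unfolding lead_time_rv_def by (auto intro!: exI[of _ "\<bar>c\<bar>"])

lemma lead_time_rv_L: "lead_time_rv (\<lambda>\<omega>. real (L t \<omega>))"
  unfolding lead_time_rv_def using L_bounded by (auto intro!: exI[of _ "real Lplus"])

lemma lead_time_rv_add: "lead_time_rv X \<Longrightarrow> lead_time_rv Z \<Longrightarrow> lead_time_rv (\<lambda>\<omega>. X \<omega> + Z \<omega>)"
  unfolding lead_time_rv_def
proof (elim conjE exE, intro conjI)
  fix B C
  assume "X \<in> borel_measurable lead_time_algebra" "Z \<in> borel_measurable lead_time_algebra"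
  then show "(\<lambda>\<omega>. X \<omega> + Z \<omega>) \<in> borel_measurable lead_time_algebra"
    by measurable
  assume "\<forall>\<omega>\<in>space M. \<bar>X \<omega>\<bar> \<le> B" "\<forall>\<omega>\<in>space M. \<bar>Z \<omega>\<bar> \<le> C"
  then show "\<exists>B. \<forall>\<omega>\<in>space M. \<bar>X \<omega> + Z \<omega>\<bar> \<le> B"
    by (intro exI[of _ "B + C"]) (auto intro!: order.trans[OF abs_triangle_ineq] add_mono)
qed

lemma lead_time_rv_mult: "lead_time_rv X \<Longrightarrow> lead_time_rv Z \<Longrightarrow> lead_time_rv (\<lambda>\<omega>. X \<omega> * Z \<omega>)"
  unfolding lead_time_rv_def
proof (elim conjE exE, intro conjI)
  fix B C
  assume "X \<in> borel_measurable lead_time_algebra" "Z \<in> borel_measurable lead_time_algebra"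
  then show "(\<lambda>\<omega>. X \<omega> * Z \<omega>) \<in> borel_measurable lead_time_algebra"
    by measurable
  assume "\<forall>\<omega>\<in>space M. \<bar>X \<omega>\<bar> \<le> B" "\<forall>\<omega>\<in>space M. \<bar>Z \<omega>\<bar> \<le> C"
  then show "\<exists>B. \<forall>\<omega>\<in>space M. \<bar>X \<omega> * Z \<omega>\<bar> \<le> B"
    by (intro exI[of _ "B * C"]) (auto simp: abs_mult intro!: mult_mono)
qed

lemma lead_time_rv_cmult: "lead_time_rv X \<Longrightarrow> lead_time_rv (\<lambda>\<omega>. c * X \<omega>)"
  using lead_time_rv_mult[OF lead_time_rv_const] by blast

lemma lead_time_rv_uminus: "lead_time_rv X \<Longrightarrow> lead_time_rv (\<lambda>\<omega>. - X \<omega>)"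
  using lead_time_rv_cmult[of X "-1"] by simp

lemma lead_time_rv_diff: "lead_time_rv X \<Longrightarrow> lead_time_rv Z \<Longrightarrow> lead_time_rv (\<lambda>\<omega>. X \<omega> - Z \<omega>)"
  using lead_time_rv_add[OF _ lead_time_rv_uminus[of Z], of X] by simp

lemma lead_time_rv_sum:
  "finite I \<Longrightarrow> (\<And>i. i \<in> I \<Longrightarrow> lead_time_rv (X i)) \<Longrightarrow> lead_time_rv (\<lambda>\<omega>. \<Sum>i\<in>I. X i \<omega>)"
  by (induction I rule: finite_induct) (auto intro: lead_time_rv_const lead_time_rv_add)

lemma demand_rv_const: "demand_rv (\<lambda>_. c)"
  unfolding demand_rv_def by auto

lemma demand_rv_D: "demand_rv (D t)"
  unfolding demand_rv_def using D_square_integrable by auto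

lemma demand_rv_eps: "demand_rv (eps t)"
  unfolding demand_rv_def using eps_square_integrable by auto

lemma demand_rv_add:
  assumes "demand_rv Y" "demand_rv Z"
  shows "demand_rv (\<lambda>\<omega>. Y \<omega> + Z \<omega>)"
proof -
  have "integrable M (\<lambda>\<omega>. (Y \<omega>)\<^sup>2 + (Z \<omega>)\<^sup>2 + 2 * (Y \<omega> * Z \<omega>))"
    using assms demand_rv_integrable_mult[OF assms] unfolding demand_rv_def by auto
  then show ?thesis
    using assms unfolding demand_rv_def power2_sum by (auto simp: mult.assoc)
qed

lemma demand_rv_cmult: "demand_rv Y \<Longrightarrow> demand_rv (\<lambda>\<omega>. c * Y \<omega>)"
  unfolding demand_rv_def by (auto simp: power_mult_distrib)

lemma demand_rv_sum:
  "finite I \<Longrightarrow> (\<And>i. i \<in> I \<Longrightarrow> demand_rv (X i)) \<Longrightarrow> demand_rv (\<lambda>\<omega>. \<Sum>i\<in>I. X i \<omega>)"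
  by (induction I rule: finite_induct) (auto intro: demand_rv_const demand_rv_add)

lemma integral_mult_lead_time_demand:
  assumes "lead_time_rv X" "Y \<in> borel_measurable demand_algebra" "integrable M Y"
  shows "integrable M (\<lambda>\<omega>. X \<omega> * Y \<omega>)"
    and "expectation (\<lambda>\<omega>. X \<omega> * Y \<omega>) = expectation X * expectation Y"
proof -
  have "indep_set (sets lead_time_algebra) (sets demand_algebra)"
    unfolding sets_lead_time_algebra sets_demand_algebra by (rule indep_L_demand)
  note indep_set_integral_mult[OF this space_lead_time_algebra space_demand_algebra]
  then show "integrable M (\<lambda>\<omega>. X \<omega> * Y \<omega>)"
    and "expectation (\<lambda>\<omega>. X \<omega> * Y \<omega>) = expectation X * expectation Y"
    using assms lead_time_rv_integrable unfolding lead_time_rv_def by blast+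
qed

text \<open>Boundedness of the lead-time factors is what keeps the mixed products
  \<open>X\<^sub>k X\<^sub>l Y\<^sub>k Y\<^sub>l\<close> integrable.\<close>

lemma expectation_square_sum_lead_time_demand:
  assumes "finite K" and XY: "\<And>k. k \<in> K \<Longrightarrow> lead_time_rv (X k) \<and> demand_rv (Y k)"
  shows "expectation (\<lambda>\<omega>. (\<Sum>k\<in>K. X k \<omega> * Y k \<omega>)\<^sup>2)
    = (\<Sum>k\<in>K. \<Sum>l\<in>K. expectation (\<lambda>\<omega>. X k \<omega> * X l \<omega>) * expectation (\<lambda>\<omega>. Y k \<omega> * Y l \<omega>))"
proof -
  have prod: "integrable M (\<lambda>\<omega>. (X k \<omega> * X l \<omega>) * (Y k \<omega> * Y l \<omega>))"
    "expectation (\<lambda>\<omega>. (X k \<omega> * X l \<omega>) * (Y k \<omega> * Y l \<omega>))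
      = expectation (\<lambda>\<omega>. X k \<omega> * X l \<omega>) * expectation (\<lambda>\<omega>. Y k \<omega> * Y l \<omega>)"
    if "k \<in> K" "l \<in> K" for k l
  proof -
    have X: "lead_time_rv (\<lambda>\<omega>. X k \<omega> * X l \<omega>)"
      using XY that by (blast intro: lead_time_rv_mult)
    have "Y k \<in> borel_measurable demand_algebra" "Y l \<in> borel_measurable demand_algebra"
      using XY that unfolding demand_rv_def by blast+
    then have Y: "(\<lambda>\<omega>. Y k \<omega> * Y l \<omega>) \<in> borel_measurable demand_algebra"
      by measurable
    have "integrable M (\<lambda>\<omega>. Y k \<omega> * Y l \<omega>)"
      using XY that by (blast intro: demand_rv_integrable_mult)
    from integral_mult_lead_time_demand[OF X Y this]
    show "integrable M (\<lambda>\<omega>. (X k \<omega> * X l \<omega>) * (Y k \<omega> * Y l \<omega>))"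
      "expectation (\<lambda>\<omega>. (X k \<omega> * X l \<omega>) * (Y k \<omega> * Y l \<omega>))
        = expectation (\<lambda>\<omega>. X k \<omega> * X l \<omega>) * expectation (\<lambda>\<omega>. Y k \<omega> * Y l \<omega>)" .
  qed
  have "(\<lambda>\<omega>. (\<Sum>k\<in>K. X k \<omega> * Y k \<omega>)\<^sup>2)
     = (\<lambda>\<omega>. \<Sum>k\<in>K. \<Sum>l\<in>K. (X k \<omega> * X l \<omega>) * (Y k \<omega> * Y l \<omega>))"
    by (auto simp: power2_eq_square sum_product intro!: sum.cong)
  then show ?thesis
    using prod by (simp add: Bochner_Integration.integral_sum Bochner_Integration.integrable_sum)
qed

lemma expectation_sum_lead_time_demand:
  assumes "finite K" and XY: "\<And>k. k \<in> K \<Longrightarrow> lead_time_rv (X k) \<and> demand_rv (Y k)"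
  shows "integrable M (\<lambda>\<omega>. \<Sum>k\<in>K. X k \<omega> * Y k \<omega>)"
    and "expectation (\<lambda>\<omega>. \<Sum>k\<in>K. X k \<omega> * Y k \<omega>) = (\<Sum>k\<in>K. expectation (X k) * expectation (Y k))"
proof -
  have "integrable M (\<lambda>\<omega>. X k \<omega> * Y k \<omega>)"
    "expectation (\<lambda>\<omega>. X k \<omega> * Y k \<omega>) = expectation (X k) * expectation (Y k)" if "k \<in> K" for k
    using XY[OF that] integral_mult_lead_time_demand[of "X k" "Y k"] demand_rv_integrable
    unfolding demand_rv_def by blast+
  then show "integrable M (\<lambda>\<omega>. \<Sum>k\<in>K. X k \<omega> * Y k \<omega>)"
    and "expectation (\<lambda>\<omega>. \<Sum>k\<in>K. X k \<omega> * Y k \<omega>) = (\<Sum>k\<in>K. expectation (X k) * expectation (Y k))"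
    by (simp_all add: Bochner_Integration.integral_sum)
qed

subsection \<open>The AR(1) demand\<close>

lemma D_integrable: "integrable M (D t)"
  using demand_rv_integrable[OF demand_rv_D] .

lemma eps_integrable: "integrable M (eps t)"
  using demand_rv_integrable[OF demand_rv_eps] .

lemma D_expectation: "expectation (D t) = muD"
proof -
  have "expectation (D t) = expectation (\<lambda>\<omega>. muD + rho * (D (t - 1) \<omega> - muD) + eps t \<omega>)"
    by (rule Bochner_Integration.integral_cong[OF refl]) (rule D_recursion)
  also have "\<dots> = muD + rho * (expectation (D (t - 1)) - muD) + expectation (eps t)"
    using D_integrable eps_integrable by (simp add: prob_space)
  finally have "expectation (D 0) = muD + rho * (expectation (D 0) - muD)"
    using D_expectation_shift[of t] D_expectation_shift[of "t - 1"] eps_mean by simp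
  then have "(1 - rho) * (expectation (D 0) - muD) = 0"
    by (simp add: algebra_simps)
  then show ?thesis
    using rho D_expectation_shift by simp
qed

definition Dc :: "int \<Rightarrow> 'a \<Rightarrow> real" where
  "Dc s \<omega> = D s \<omega> - muD"

definition sigmaD2 :: real where
  "sigmaD2 = expectation (\<lambda>\<omega>. Dc 0 \<omega> * Dc 0 \<omega>)"

lemma demand_rv_Dc: "demand_rv (Dc s)"
  unfolding Dc_def using demand_rv_add[OF demand_rv_D demand_rv_const[of "-muD"]] by simp

lemma Dc_integrable_mult: "integrable M (\<lambda>\<omega>. Dc s \<omega> * Dc u \<omega>)"
  by (intro demand_rv_integrable_mult demand_rv_Dc)

lemma eps_Dc_integrable_mult: "integrable M (\<lambda>\<omega>. eps s \<omega> * Dc u \<omega>)"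
  by (intro demand_rv_integrable_mult demand_rv_Dc demand_rv_eps)

lemma eps_integrable_mult: "integrable M (\<lambda>\<omega>. eps s \<omega> * eps u \<omega>)"
  by (intro demand_rv_integrable_mult demand_rv_eps)

lemma Dc_expectation: "expectation (Dc s) = 0"
  unfolding Dc_def using D_integrable[of s] D_expectation[of s] by (simp add: prob_space)

lemma Dc_second_moment: "expectation (\<lambda>\<omega>. Dc s \<omega> * Dc s \<omega>) = sigmaD2"
proof -
  have "expectation (\<lambda>\<omega>. Dc u \<omega> * Dc u \<omega>) = expectation (\<lambda>\<omega>. D u \<omega> * D u \<omega>) - muD\<^sup>2" for u
  proof -
    have "expectation (\<lambda>\<omega>. Dc u \<omega> * Dc u \<omega>)
      = expectation (\<lambda>\<omega>. D u \<omega> * D u \<omega> - 2 * muD * D u \<omega> + muD\<^sup>2)"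
      unfolding Dc_def by (rule Bochner_Integration.integral_cong) (auto simp: algebra_simps power2_eq_square)
    also have "\<dots> = expectation (\<lambda>\<omega>. D u \<omega> * D u \<omega>) - 2 * muD * expectation (D u) + muD\<^sup>2"
      using demand_rv_integrable_mult[OF demand_rv_D demand_rv_D, of u u] D_integrable[of u]
      by (simp add: prob_space)
    finally show ?thesis
      by (simp add: D_expectation power2_eq_square)
  qed
  then show ?thesis
    unfolding sigmaD2_def using D_second_moment_shift[of s] by simp
qed

lemma D_variance: "variance (D t) = sigmaD2"
  using Dc_second_moment[of t] unfolding D_expectation Dc_def by (simp add: power2_eq_square)

lemma eps_second_moment: "expectation (\<lambda>\<omega>. eps t \<omega> * eps t \<omega>) = sigma2"
  using eps_variance[of t] eps_mean[of t] by (simp add: power2_eq_square)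

lemma eps_uncorrelated:
  assumes "t \<noteq> s"
  shows "expectation (\<lambda>\<omega>. eps t \<omega> * eps s \<omega>) = 0"
  using indep_vars_integral_mult[OF indep_eps_L, of "Inl t" "Inl s"] assms eps_integrable eps_mean
  by simp

lemma Dc_recursion: "\<omega> \<in> space M \<Longrightarrow> Dc s \<omega> = rho * Dc (s - 1) \<omega> + eps s \<omega>"
  unfolding Dc_def using D_recursion[of _ s] by simp

lemma Dc_unroll:
  "\<omega> \<in> space M \<Longrightarrow> Dc s \<omega> = rho ^ K * Dc (s - int K) \<omega> + (\<Sum>k<K. rho ^ k * eps (s - int k) \<omega>)"
proof (induction K)
  case (Suc K)
  have "Dc (s - int K) \<omega> = rho * Dc (s - int (Suc K)) \<omega> + eps (s - int K) \<omega>"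
    using Dc_recursion[OF Suc.prems, of "s - int K"] by (simp add: algebra_simps)
  then show ?case
    using Suc by (simp add: algebra_simps)
qed simp

lemma eps_Dc_bounded: "\<bar>expectation (\<lambda>\<omega>. eps t \<omega> * Dc u \<omega>)\<bar> \<le> (sigma2 + sigmaD2) / 2"
proof -
  have "\<bar>expectation (\<lambda>\<omega>. eps t \<omega> * Dc u \<omega>)\<bar> \<le> expectation (\<lambda>\<omega>. \<bar>eps t \<omega> * Dc u \<omega>\<bar>)"
    using integral_norm_bound[of M "\<lambda>\<omega>. eps t \<omega> * Dc u \<omega>"] by simp
  also have "\<dots> \<le> expectation (\<lambda>\<omega>. (eps t \<omega> * eps t \<omega> + Dc u \<omega> * Dc u \<omega>) / 2)"
  proof (rule integral_mono)
    show "\<bar>eps t \<omega> * Dc u \<omega>\<bar> \<le> (eps t \<omega> * eps t \<omega> + Dc u \<omega> * Dc u \<omega>) / 2" for \<omega>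
      using sum_squares_bound[of "\<bar>eps t \<omega>\<bar>" "\<bar>Dc u \<omega>\<bar>"]
      by (simp add: abs_mult power2_eq_square)
  qed (use eps_Dc_integrable_mult eps_integrable_mult Dc_integrable_mult in auto)
  also have "\<dots> = (sigma2 + sigmaD2) / 2"
    using eps_integrable_mult Dc_integrable_mult by (simp add: eps_second_moment Dc_second_moment)
  finally show ?thesis .
qed

text \<open>The demand is not assumed to be causal in the innovations. Unrolling the recursion
  \<open>K\<close> steps gives \<open>E[\<epsilon>\<^sub>t Dc\<^sub>s] = \<rho>\<^sup>K E[\<epsilon>\<^sub>t Dc\<^sub>s\<^sub>-\<^sub>K]\<close>, and stationarity bounds the last
  factor uniformly in \<open>K\<close>.\<close>

lemma eps_Dc_uncorrelated:
  assumes "s < t"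
  shows "expectation (\<lambda>\<omega>. eps t \<omega> * Dc s \<omega>) = 0"
proof -
  let ?E = "expectation (\<lambda>\<omega>. eps t \<omega> * Dc s \<omega>)"
  have unrolled: "?E = rho ^ K * expectation (\<lambda>\<omega>. eps t \<omega> * Dc (s - int K) \<omega>)" for K
  proof -
    have "?E = expectation (\<lambda>\<omega>. rho ^ K * (eps t \<omega> * Dc (s - int K) \<omega>)
                 + (\<Sum>k<K. rho ^ k * (eps t \<omega> * eps (s - int k) \<omega>)))"
      by (rule Bochner_Integration.integral_cong[OF refl], subst Dc_unroll[of _ s K])
         (auto simp: algebra_simps sum_distrib_left)
    also have "\<dots> = rho ^ K * expectation (\<lambda>\<omega>. eps t \<omega> * Dc (s - int K) \<omega>)
                 + (\<Sum>k<K. rho ^ k * expectation (\<lambda>\<omega>. eps t \<omega> * eps (s - int k) \<omega>))"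
      using eps_Dc_integrable_mult eps_integrable_mult
      by (simp add: Bochner_Integration.integral_sum)
    also have "(\<Sum>k<K. rho ^ k * expectation (\<lambda>\<omega>. eps t \<omega> * eps (s - int k) \<omega>)) = 0"
      using assms by (intro sum.neutral) (auto simp: eps_uncorrelated)
    finally show ?thesis
      by simp
  qed
  have bound: "\<bar>?E\<bar> \<le> \<bar>rho\<bar> ^ K * ((sigma2 + sigmaD2) / 2)" for K
    using mult_left_mono[OF eps_Dc_bounded[of t "s - int K"], of "\<bar>rho\<bar> ^ K"] unrolled[of K]
    by (simp add: abs_mult power_abs)
  have "(\<lambda>K. \<bar>rho\<bar> ^ K * ((sigma2 + sigmaD2) / 2)) \<longlonglongrightarrow> 0"
    using rho by (intro tendsto_mult_left_zero LIMSEQ_power_zero) auto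
  then have "\<bar>?E\<bar> \<le> 0"
    by (rule LIMSEQ_le_const) (use bound in blast)
  then show ?thesis
    by simp
qed

lemma sigmaD2_eq: "sigmaD2 = sigma2 / (1 - rho\<^sup>2)"
proof -
  have "sigmaD2 = expectation (\<lambda>\<omega>. Dc 0 \<omega> * Dc 0 \<omega>)"
    by (simp add: Dc_second_moment)
  also have "\<dots> = expectation (\<lambda>\<omega>. rho\<^sup>2 * (Dc (-1) \<omega> * Dc (-1) \<omega>)
        + 2 * rho * (eps 0 \<omega> * Dc (-1) \<omega>) + eps 0 \<omega> * eps 0 \<omega>)"
    by (rule Bochner_Integration.integral_cong[OF refl], subst (1 2) Dc_recursion)
       (auto simp: algebra_simps power2_eq_square)
  also have "\<dots> = rho\<^sup>2 * sigmaD2 + sigma2"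
    using Dc_integrable_mult eps_Dc_integrable_mult eps_integrable_mult
      eps_Dc_uncorrelated[of "-1" 0]
    by (simp add: Dc_second_moment eps_second_moment)
  finally have "(1 - rho\<^sup>2) * sigmaD2 = sigma2"
    by (simp add: algebra_simps)
  moreover have "rho\<^sup>2 < 1"
    using rho by (simp add: abs_less_iff power2_less_1_iff)
  ultimately show ?thesis
    by (simp add: field_simps)
qed

lemma sigmaD2_pos: "sigmaD2 > 0"
proof -
  have "rho\<^sup>2 < 1"
    using rho by (simp add: abs_less_iff power2_less_1_iff)
  then show ?thesis
    unfolding sigmaD2_eq using sigma2_pos by simp
qed

lemma Dc_autocovariance: "expectation (\<lambda>\<omega>. Dc (s + int k) \<omega> * Dc s \<omega>) = rho ^ k * sigmaD2"
proof (induction k)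
  case 0
  then show ?case
    by (simp add: Dc_second_moment)
next
  case (Suc k)
  have "expectation (\<lambda>\<omega>. Dc (s + int (Suc k)) \<omega> * Dc s \<omega>)
      = expectation (\<lambda>\<omega>. rho * (Dc (s + int k) \<omega> * Dc s \<omega>) + eps (s + int (Suc k)) \<omega> * Dc s \<omega>)"
    by (rule Bochner_Integration.integral_cong[OF refl], subst Dc_recursion) (auto simp: algebra_simps)
  also have "\<dots> = rho * expectation (\<lambda>\<omega>. Dc (s + int k) \<omega> * Dc s \<omega>)
      + expectation (\<lambda>\<omega>. eps (s + int (Suc k)) \<omega> * Dc s \<omega>)"
    using eps_Dc_integrable_mult Dc_integrable_mult by simp
  also have "\<dots> = rho ^ Suc k * sigmaD2"
    using Suc eps_Dc_uncorrelated[of s "s + int (Suc k)"] by simp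
  finally show ?case .
qed

subsection \<open>Lead times\<close>

lemma L_integral_shift:
  fixes g :: "nat \<Rightarrow> real"
  shows "expectation (\<lambda>\<omega>. g (L t \<omega>)) = expectation (\<lambda>\<omega>. g (L 0 \<omega>))"
  by (rule integral_comp_eq_if_distr_eq[OF L_distr]) simp_all

lemma L_expectation: "expectation (\<lambda>\<omega>. real (L s \<omega>)) = muL"
  using L_integral_shift[of real s] L_mean by simp

definition Lc :: "int \<Rightarrow> 'a \<Rightarrow> real" where
  "Lc s \<omega> = real (L s \<omega>) - muL"

lemma lead_time_rv_Lc: "lead_time_rv (Lc s)"
  unfolding Lc_def by (intro lead_time_rv_diff lead_time_rv_L lead_time_rv_const)

lemma Lc_integrable_mult: "integrable M (\<lambda>\<omega>. Lc s \<omega> * Lc u \<omega>)"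
  by (intro lead_time_rv_integrable lead_time_rv_mult lead_time_rv_Lc)

lemma Lc_expectation: "expectation (Lc s) = 0"
  unfolding Lc_def using lead_time_rv_integrable[OF lead_time_rv_L] L_expectation
  by (simp add: prob_space)

lemma Lc_second_moment: "expectation (\<lambda>\<omega>. Lc s \<omega> * Lc s \<omega>) = sigmaL2"
proof -
  have "expectation (\<lambda>\<omega>. Lc s \<omega> * Lc s \<omega>) = expectation (\<lambda>\<omega>. (real (L s \<omega>) - muL)\<^sup>2)"
    unfolding Lc_def by (simp add: power2_eq_square)
  also have "\<dots> = expectation (\<lambda>\<omega>. (real (L 0 \<omega>) - muL)\<^sup>2)"
    by (rule L_integral_shift)
  finally show ?thesis
    using L_variance L_mean by simp
qed

lemma Lc_uncorrelated:
  assumes "s \<noteq> u"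
  shows "expectation (\<lambda>\<omega>. Lc s \<omega> * Lc u \<omega>) = 0"
proof -
  have "expectation (\<lambda>\<omega>. Lc s \<omega> * Lc u \<omega>)
     = expectation (\<lambda>\<omega>. real (L s \<omega>) * real (L u \<omega>) - muL * real (L s \<omega>) - muL * real (L u \<omega>) + muL * muL)"
    unfolding Lc_def by (rule Bochner_Integration.integral_cong) (auto simp: algebra_simps)
  also have "\<dots> = 0"
    using indep_vars_integral_mult[OF indep_eps_L, of "Inr s" "Inr u"] assms
      lead_time_rv_integrable[OF lead_time_rv_mult[OF lead_time_rv_L lead_time_rv_L]]
      lead_time_rv_integrable[OF lead_time_rv_L] L_expectation
    by (simp add: prob_space)
  finally show ?thesis .
qed

lemma Lc_sum_second_moment:
  assumes "finite I" "inj_on h I"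
  shows "expectation (\<lambda>\<omega>. (\<Sum>i\<in>I. Lc (h i) \<omega>) * (\<Sum>i\<in>I. Lc (h i) \<omega>)) = real (card I) * sigmaL2"
proof -
  have "expectation (\<lambda>\<omega>. (\<Sum>i\<in>I. Lc (h i) \<omega>) * (\<Sum>i\<in>I. Lc (h i) \<omega>))
     = (\<Sum>i\<in>I. \<Sum>j\<in>I. expectation (\<lambda>\<omega>. Lc (h i) \<omega> * Lc (h j) \<omega>))"
    using Lc_integrable_mult by (simp add: sum_product Bochner_Integration.integral_sum)
  also have "\<dots> = (\<Sum>i\<in>I. \<Sum>j\<in>I. if j = i then sigmaL2 else 0)"
  proof (intro sum.cong refl)
    fix i j
    assume "i \<in> I" "j \<in> I"
    then show "expectation (\<lambda>\<omega>. Lc (h i) \<omega> * Lc (h j) \<omega>) = (if j = i then sigmaL2 else 0)"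
      using assms(2) Lc_second_moment Lc_uncorrelated[of "h i" "h j"] by (auto simp: inj_on_def)
  qed
  also have "\<dots> = real (card I) * sigmaL2"
    using assms(1) by simp
  finally show ?thesis .
qed

subsection \<open>Forecast errors\<close>

definition L_hat_err :: "int \<Rightarrow> 'a \<Rightarrow> real" where
  "L_hat_err t \<omega> = L_hat m Lplus L t \<omega> - muL"

definition D_hat_err :: "int \<Rightarrow> 'a \<Rightarrow> real" where
  "D_hat_err t \<omega> = D_hat n D t \<omega> - muD"

lemma L_hat_err_eq: "L_hat_err t \<omega> = (1 / real m) * (\<Sum>i\<in>{1..m}. Lc (t - int i - int Lplus) \<omega>)"
  using m unfolding L_hat_err_def L_hat_def Lc_def by (simp add: sum_subtractf field_simps)

lemma D_hat_err_eq: "D_hat_err t \<omega> = (1 / real n) * (\<Sum>i\<in>{1..n}. Dc (t - int i) \<omega>)"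
  using n unfolding D_hat_err_def D_hat_def Dc_def by (simp add: sum_subtractf field_simps)

lemma lead_time_rv_L_hat_err: "lead_time_rv (L_hat_err t)"
  unfolding L_hat_err_eq[abs_def]
  by (intro lead_time_rv_cmult lead_time_rv_sum lead_time_rv_Lc) simp

lemma demand_rv_D_hat_err: "demand_rv (D_hat_err t)"
  unfolding D_hat_err_eq[abs_def]
  by (intro demand_rv_cmult demand_rv_sum demand_rv_Dc) simp

lemma L_hat_err_integrable_mult: "integrable M (\<lambda>\<omega>. L_hat_err s \<omega> * L_hat_err u \<omega>)"
  by (intro lead_time_rv_integrable lead_time_rv_mult lead_time_rv_L_hat_err)

lemma D_hat_err_integrable_mult: "integrable M (\<lambda>\<omega>. D_hat_err s \<omega> * D_hat_err u \<omega>)"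
  by (intro demand_rv_integrable_mult demand_rv_D_hat_err)

lemma L_hat_err_expectation: "expectation (L_hat_err t) = 0"
  unfolding L_hat_err_eq[abs_def]
  using lead_time_rv_integrable[OF lead_time_rv_Lc]
  by (simp add: Lc_expectation Bochner_Integration.integral_sum)

lemma D_hat_err_expectation: "expectation (D_hat_err t) = 0"
  unfolding D_hat_err_eq[abs_def]
  using demand_rv_integrable[OF demand_rv_Dc]
  by (simp add: Dc_expectation Bochner_Integration.integral_sum)

lemma L_hat_err_second_moment: "expectation (\<lambda>\<omega>. L_hat_err t \<omega> * L_hat_err t \<omega>) = sigmaL2 / real m"
proof -
  have inj: "inj_on (\<lambda>i. t - int i - int Lplus) {1..m}"
    by (auto simp: inj_on_def)
  have "expectation (\<lambda>\<omega>. L_hat_err t \<omega> * L_hat_err t \<omega>) = (1 / real m)\<^sup>2 *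
      expectation (\<lambda>\<omega>. (\<Sum>i\<in>{1..m}. Lc (t - int i - int Lplus) \<omega>) * (\<Sum>i\<in>{1..m}. Lc (t - int i - int Lplus) \<omega>))"
    unfolding L_hat_err_eq by (simp add: power2_eq_square algebra_simps)
  also have "\<dots> = sigmaL2 / real m"
    using Lc_sum_second_moment[OF _ inj] m by (simp add: power2_eq_square)
  finally show ?thesis .
qed

lemma L_hat_err_diff:
  "L_hat_err t \<omega> - L_hat_err (t - 1) \<omega>
     = (1 / real m) * (Lc (t - 1 - int Lplus) \<omega> - Lc (t - 1 - int m - int Lplus) \<omega>)"
proof -
  have "L_hat_err t \<omega> - L_hat_err (t - 1) \<omega> = (1 / real m) * ((\<Sum>i\<in>{1..m}. Lc (t - int i - int Lplus) \<omega>)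
     - (\<Sum>i\<in>{1..m}. Lc (t - 1 - int i - int Lplus) \<omega>))"
    unfolding L_hat_err_eq by (simp add: algebra_simps)
  then show ?thesis
    using moving_sum_diff[of "\<lambda>s. Lc (s - int Lplus) \<omega>" t m] by simp
qed

lemma D_hat_err_diff:
  "D_hat_err t \<omega> - D_hat_err (t - 1) \<omega> = (1 / real n) * (Dc (t - 1) \<omega> - Dc (t - 1 - int n) \<omega>)"
proof -
  have "D_hat_err t \<omega> - D_hat_err (t - 1) \<omega> = (1 / real n) * ((\<Sum>i\<in>{1..n}. Dc (t - int i) \<omega>)
     - (\<Sum>i\<in>{1..n}. Dc (t - 1 - int i) \<omega>))"
    unfolding D_hat_err_eq by (simp add: algebra_simps)
  then show ?thesis
    using moving_sum_diff[of "\<lambda>s. Dc s \<omega>" t n] by simp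
qed

lemma L_hat_err_diff_second_moment:
  "expectation (\<lambda>\<omega>. (L_hat_err t \<omega> - L_hat_err (t - 1) \<omega>) * (L_hat_err t \<omega> - L_hat_err (t - 1) \<omega>))
     = 2 * sigmaL2 / (real m)\<^sup>2"
proof -
  let ?a = "t - 1 - int Lplus" and ?b = "t - 1 - int m - int Lplus"
  have "?a \<noteq> ?b"
    using m by simp
  have "expectation (\<lambda>\<omega>. (L_hat_err t \<omega> - L_hat_err (t - 1) \<omega>) * (L_hat_err t \<omega> - L_hat_err (t - 1) \<omega>))
    = expectation (\<lambda>\<omega>. ((1 / real m) * Lc ?a \<omega> + (- 1 / real m) * Lc ?b \<omega>)
                      * ((1 / real m) * Lc ?a \<omega> + (- 1 / real m) * Lc ?b \<omega>))"
    unfolding L_hat_err_diff by (simp add: algebra_simps)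
  also have "\<dots> = 2 * sigmaL2 / (real m)\<^sup>2"
    by (subst integral_lincomb_square[OF Lc_integrable_mult Lc_integrable_mult Lc_integrable_mult],
        simp only: Lc_second_moment Lc_uncorrelated[OF \<open>?a \<noteq> ?b\<close>])
       (simp add: power2_eq_square field_simps)
  finally show ?thesis .
qed

lemma L_hat_err_lag_covariance:
  "expectation (\<lambda>\<omega>. L_hat_err t \<omega> * L_hat_err (t - 1) \<omega>) = sigmaL2 / real m - sigmaL2 / (real m)\<^sup>2"
proof -
  have "expectation (\<lambda>\<omega>. L_hat_err t \<omega> * L_hat_err (t - 1) \<omega>)
     = (expectation (\<lambda>\<omega>. L_hat_err t \<omega> * L_hat_err t \<omega>)
        + expectation (\<lambda>\<omega>. L_hat_err (t - 1) \<omega> * L_hat_err (t - 1) \<omega>)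
        - expectation (\<lambda>\<omega>. (L_hat_err t \<omega> - L_hat_err (t - 1) \<omega>) * (L_hat_err t \<omega> - L_hat_err (t - 1) \<omega>))) / 2"
    by (intro integral_mult_polarization L_hat_err_integrable_mult)
  also have "\<dots> = (sigmaL2 / real m + sigmaL2 / real m - 2 * sigmaL2 / (real m)\<^sup>2) / 2"
    by (simp only: L_hat_err_second_moment L_hat_err_diff_second_moment)
  also have "\<dots> = sigmaL2 / real m - sigmaL2 / (real m)\<^sup>2"
    by (simp add: field_simps)
  finally show ?thesis .
qed

lemma Dc_sum_covariance:
  "expectation (\<lambda>\<omega>. (\<Sum>i\<in>{1..k}. Dc (t - int i) \<omega>) * Dc (t - int (Suc k)) \<omega>)
     = sigmaD2 * (rho * (1 - rho ^ k) / (1 - rho))"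
proof -
  have "rho \<noteq> 1"
    using rho by simp
  have "expectation (\<lambda>\<omega>. (\<Sum>i\<in>{1..k}. Dc (t - int i) \<omega>) * Dc (t - int (Suc k)) \<omega>)
      = (\<Sum>i\<in>{1..k}. expectation (\<lambda>\<omega>. Dc (t - int i) \<omega> * Dc (t - int (Suc k)) \<omega>))"
    unfolding sum_distrib_right by (rule Bochner_Integration.integral_sum) (rule Dc_integrable_mult)
  also have "\<dots> = (\<Sum>i\<in>{1..k}. rho ^ (k + 1 - i) * sigmaD2)"
  proof (intro sum.cong refl)
    fix i
    assume "i \<in> {1..k}"
    then have "t - int (Suc k) + int (k + 1 - i) = t - int i"
      by auto
    then show "expectation (\<lambda>\<omega>. Dc (t - int i) \<omega> * Dc (t - int (Suc k)) \<omega>) = rho ^ (k + 1 - i) * sigmaD2"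
      using Dc_autocovariance[of "t - int (Suc k)" "k + 1 - i"] by simp
  qed
  also have "\<dots> = sigmaD2 * (rho * (1 - rho ^ k) / (1 - rho))"
    unfolding sum_distrib_right[symmetric] geometric_sum_reversed[OF \<open>rho \<noteq> 1\<close>] by simp
  finally show ?thesis .
qed

lemma Dc_sum_second_moment:
  "expectation (\<lambda>\<omega>. (\<Sum>i\<in>{1..k}. Dc (t - int i) \<omega>) * (\<Sum>i\<in>{1..k}. Dc (t - int i) \<omega>))
     = sigmaD2 * (real k * (1 + rho) / (1 - rho) - 2 * rho * (1 - rho ^ k) / (1 - rho)\<^sup>2)"
proof (induction k)
  case (Suc k)
  define S where "S \<omega> = (\<Sum>i\<in>{1..k}. Dc (t - int i) \<omega>)" for \<omega>
  let ?X = "Dc (t - int (Suc k))"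
  have "demand_rv S"
    unfolding S_def[abs_def] by (intro demand_rv_sum demand_rv_Dc) simp
  have "expectation (\<lambda>\<omega>. (\<Sum>i\<in>{1..Suc k}. Dc (t - int i) \<omega>) * (\<Sum>i\<in>{1..Suc k}. Dc (t - int i) \<omega>))
      = expectation (\<lambda>\<omega>. (1 * S \<omega> + 1 * ?X \<omega>) * (1 * S \<omega> + 1 * ?X \<omega>))"
    by (simp add: sum.cl_ivl_Suc S_def)
  also have "\<dots> = expectation (\<lambda>\<omega>. S \<omega> * S \<omega>) + 2 * expectation (\<lambda>\<omega>. S \<omega> * ?X \<omega>) + sigmaD2"
    using \<open>demand_rv S\<close>
    by (subst integral_lincomb_square)
       (auto intro: demand_rv_integrable_mult demand_rv_Dc simp: Dc_second_moment)
  also have "\<dots> = sigmaD2 * (real (Suc k) * (1 + rho) / (1 - rho) - 2 * rho * (1 - rho ^ Suc k) / (1 - rho)\<^sup>2)"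
  proof -
    define q where "q = 1 - rho"
    have "q \<noteq> 0" "rho = 1 - q"
      using rho by (simp_all add: q_def)
    then show ?thesis
      unfolding Dc_sum_covariance[where k = k and t = t, folded S_def] Suc.IH[folded S_def] \<open>rho = 1 - q\<close>
      by (simp add: field_simps) (simp add: algebra_simps eval_nat_numeral)
  qed
  finally show ?case .
qed simp

definition var_D_hat :: real where
  "var_D_hat = sigmaD2 * (real n * (1 + rho) / (1 - rho) - 2 * rho * (1 - rho ^ n) / (1 - rho)\<^sup>2) / (real n)\<^sup>2"

lemma D_hat_err_second_moment: "expectation (\<lambda>\<omega>. D_hat_err t \<omega> * D_hat_err t \<omega>) = var_D_hat"
proof -
  have "expectation (\<lambda>\<omega>. D_hat_err t \<omega> * D_hat_err t \<omega>) = (1 / real n)\<^sup>2 *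
      expectation (\<lambda>\<omega>. (\<Sum>i\<in>{1..n}. Dc (t - int i) \<omega>) * (\<Sum>i\<in>{1..n}. Dc (t - int i) \<omega>))"
    unfolding D_hat_err_eq by (simp add: power2_eq_square algebra_simps)
  then show ?thesis
    unfolding Dc_sum_second_moment var_D_hat_def by (simp add: power_one_over)
qed

lemma Dc_lag_n_covariance: "expectation (\<lambda>\<omega>. Dc (t - 1) \<omega> * Dc (t - 1 - int n) \<omega>) = rho ^ n * sigmaD2"
  using Dc_autocovariance[of "t - 1 - int n" n] by simp

lemma D_hat_err_diff_second_moment:
  "expectation (\<lambda>\<omega>. (D_hat_err t \<omega> - D_hat_err (t - 1) \<omega>) * (D_hat_err t \<omega> - D_hat_err (t - 1) \<omega>))
     = 2 * sigmaD2 * (1 - rho ^ n) / (real n)\<^sup>2"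
proof -
  let ?a = "t - 1" and ?b = "t - 1 - int n"
  have "expectation (\<lambda>\<omega>. (D_hat_err t \<omega> - D_hat_err (t - 1) \<omega>) * (D_hat_err t \<omega> - D_hat_err (t - 1) \<omega>))
    = expectation (\<lambda>\<omega>. ((1 / real n) * Dc ?a \<omega> + (- 1 / real n) * Dc ?b \<omega>)
                      * ((1 / real n) * Dc ?a \<omega> + (- 1 / real n) * Dc ?b \<omega>))"
    unfolding D_hat_err_diff by (simp add: algebra_simps)
  also have "\<dots> = 2 * sigmaD2 * (1 - rho ^ n) / (real n)\<^sup>2"
    using n
    by (subst integral_lincomb_square[OF Dc_integrable_mult Dc_integrable_mult Dc_integrable_mult],
        simp only: Dc_second_moment Dc_lag_n_covariance)
       (simp add: power2_eq_square field_simps)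
  finally show ?thesis .
qed

lemma D_hat_err_lag_covariance:
  "expectation (\<lambda>\<omega>. D_hat_err t \<omega> * D_hat_err (t - 1) \<omega>) = var_D_hat - sigmaD2 * (1 - rho ^ n) / (real n)\<^sup>2"
proof -
  have "expectation (\<lambda>\<omega>. D_hat_err t \<omega> * D_hat_err (t - 1) \<omega>)
     = (expectation (\<lambda>\<omega>. D_hat_err t \<omega> * D_hat_err t \<omega>)
        + expectation (\<lambda>\<omega>. D_hat_err (t - 1) \<omega> * D_hat_err (t - 1) \<omega>)
        - expectation (\<lambda>\<omega>. (D_hat_err t \<omega> - D_hat_err (t - 1) \<omega>) * (D_hat_err t \<omega> - D_hat_err (t - 1) \<omega>))) / 2"
    by (intro integral_mult_polarization D_hat_err_integrable_mult)
  also have "\<dots> = (var_D_hat + var_D_hat - 2 * sigmaD2 * (1 - rho ^ n) / (real n)\<^sup>2) / 2"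
    by (simp only: D_hat_err_second_moment D_hat_err_diff_second_moment)
  also have "\<dots> = var_D_hat - sigmaD2 * (1 - rho ^ n) / (real n)\<^sup>2"
    by (simp add: field_simps)
  finally show ?thesis .
qed

subsection \<open>Variance of the orders\<close>

text \<open>The centred order that would be placed if the lead-time forecast were exact.\<close>

definition fixed_lead_order_dev :: "int \<Rightarrow> 'a \<Rightarrow> real" where
  "fixed_lead_order_dev t \<omega> = muL * (D_hat_err t \<omega> - D_hat_err (t - 1) \<omega>) + Dc (t - 1) \<omega>"

lemma fixed_lead_order_dev_eq:
  "fixed_lead_order_dev t \<omega> = (1 + muL / real n) * Dc (t - 1) \<omega> + (- muL / real n) * Dc (t - 1 - int n) \<omega>"
  unfolding fixed_lead_order_dev_def D_hat_err_diff by (simp add: algebra_simps)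

lemma demand_rv_fixed_lead_order_dev: "demand_rv (fixed_lead_order_dev t)"
  unfolding fixed_lead_order_dev_eq[abs_def] by (intro demand_rv_add demand_rv_cmult demand_rv_Dc)

lemma fixed_lead_order_dev_expectation: "expectation (fixed_lead_order_dev t) = 0"
  unfolding fixed_lead_order_dev_eq[abs_def]
  using demand_rv_integrable[OF demand_rv_Dc] by (simp add: Dc_expectation)

lemma fixed_lead_order_dev_second_moment:
  "expectation (\<lambda>\<omega>. fixed_lead_order_dev t \<omega> * fixed_lead_order_dev t \<omega>)
     = sigmaD2 * ((1 + muL / real n)\<^sup>2 + (muL / real n)\<^sup>2 - 2 * (1 + muL / real n) * (muL / real n) * rho ^ n)"
  unfolding fixed_lead_order_dev_eq
  by (subst integral_lincomb_square[OF Dc_integrable_mult Dc_integrable_mult Dc_integrable_mult],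
      simp only: Dc_second_moment Dc_lag_n_covariance)
     (simp add: power2_eq_square algebra_simps)

lemma order_qty_decomposition:
  "order_qty n m Lplus TNS D L t \<omega> - muD
     = (L_hat_err t \<omega> - L_hat_err (t - 1) \<omega>) * muD + fixed_lead_order_dev t \<omega>
       + L_hat_err t \<omega> * D_hat_err t \<omega> - L_hat_err (t - 1) \<omega> * D_hat_err (t - 1) \<omega>"
proof -
  have "L_hat m Lplus L s \<omega> = L_hat_err s \<omega> + muL" "D_hat n D s \<omega> = D_hat_err s \<omega> + muD" for s
    unfolding L_hat_err_def D_hat_err_def by simp_all
  moreover have "D (t - 1) \<omega> = Dc (t - 1) \<omega> + muD"
    unfolding Dc_def by simp
  ultimately show ?thesis
    unfolding order_qty_def order_up_to_def fixed_lead_order_dev_def by (simp add: algebra_simps)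
qed

text \<open>The four summands of \<open>order_qty_decomposition\<close>, each split into a lead-time and a demand
  factor.\<close>

definition lead_time_factor :: "int \<Rightarrow> nat \<Rightarrow> 'a \<Rightarrow> real" where
  "lead_time_factor t k = (if k = 0 then (\<lambda>\<omega>. L_hat_err t \<omega> - L_hat_err (t - 1) \<omega>)
     else if k = 1 then (\<lambda>_. 1) else if k = 2 then L_hat_err t else (\<lambda>\<omega>. - L_hat_err (t - 1) \<omega>))"

definition demand_factor :: "int \<Rightarrow> nat \<Rightarrow> 'a \<Rightarrow> real" where
  "demand_factor t k = (if k = 0 then (\<lambda>_. muD)
     else if k = 1 then fixed_lead_order_dev t else if k = 2 then D_hat_err t else D_hat_err (t - 1))"

lemma order_qty_factor_sum:
  "order_qty n m Lplus TNS D L t \<omega> - muD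
     = (\<Sum>k\<in>{0, 1, 2, 3}. lead_time_factor t k \<omega> * demand_factor t k \<omega>)"
  unfolding order_qty_decomposition by (simp add: lead_time_factor_def demand_factor_def)

lemma order_qty_factors:
  "k \<in> {0, 1, 2, 3} \<Longrightarrow> lead_time_rv (lead_time_factor t k) \<and> demand_rv (demand_factor t k)"
  by (auto simp: lead_time_factor_def demand_factor_def intro: lead_time_rv_diff lead_time_rv_uminus
      lead_time_rv_L_hat_err lead_time_rv_const demand_rv_const demand_rv_fixed_lead_order_dev
      demand_rv_D_hat_err)

lemma order_qty_expectation: "expectation (order_qty n m Lplus TNS D L t) = muD"
proof -
  have "expectation (\<lambda>\<omega>. order_qty n m Lplus TNS D L t \<omega> - muD)
     = (\<Sum>k\<in>{0, 1, 2, 3}. expectation (lead_time_factor t k) * expectation (demand_factor t k))"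
    unfolding order_qty_factor_sum by (rule expectation_sum_lead_time_demand(2)) (simp_all add: order_qty_factors)
  also have "\<dots> = 0"
    using lead_time_rv_integrable[OF lead_time_rv_L_hat_err]
    by (simp add: lead_time_factor_def demand_factor_def L_hat_err_expectation D_hat_err_expectation
        fixed_lead_order_dev_expectation)
  finally have "expectation (\<lambda>\<omega>. order_qty n m Lplus TNS D L t \<omega> - muD) = 0" .
  moreover have "integrable M (\<lambda>\<omega>. order_qty n m Lplus TNS D L t \<omega> - muD)"
    unfolding order_qty_factor_sum by (rule expectation_sum_lead_time_demand(1)) (simp_all add: order_qty_factors)
  then have "integrable M (\<lambda>\<omega>. (order_qty n m Lplus TNS D L t \<omega> - muD) + muD)"
    by (rule Bochner_Integration.integrable_add) simp
  then have "integrable M (order_qty n m Lplus TNS D L t)"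
    by simp
  ultimately show ?thesis
    by (simp add: prob_space)
qed

lemma order_qty_variance:
  "variance (order_qty n m Lplus TNS D L t)
     = muD\<^sup>2 * (2 * sigmaL2 / (real m)\<^sup>2)
       + sigmaD2 * ((1 + muL / real n)\<^sup>2 + (muL / real n)\<^sup>2 - 2 * (1 + muL / real n) * (muL / real n) * rho ^ n)
       + 2 * (sigmaL2 / real m) * var_D_hat
       - 2 * (sigmaL2 / real m - sigmaL2 / (real m)\<^sup>2) * (var_D_hat - sigmaD2 * (1 - rho ^ n) / (real n)\<^sup>2)"
proof -
  have "variance (order_qty n m Lplus TNS D L t)
      = expectation (\<lambda>\<omega>. (\<Sum>k\<in>{0, 1, 2, 3}. lead_time_factor t k \<omega> * demand_factor t k \<omega>)\<^sup>2)"
    by (simp only: order_qty_expectation order_qty_factor_sum)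
  also have "\<dots> = (\<Sum>k\<in>{0, 1, 2, 3}. \<Sum>l\<in>{0, 1, 2, 3}.
      expectation (\<lambda>\<omega>. lead_time_factor t k \<omega> * lead_time_factor t l \<omega>)
      * expectation (\<lambda>\<omega>. demand_factor t k \<omega> * demand_factor t l \<omega>))"
    by (rule expectation_square_sum_lead_time_demand) (simp_all add: order_qty_factors)
  also have "\<dots> = muD\<^sup>2 * (2 * sigmaL2 / (real m)\<^sup>2)
       + sigmaD2 * ((1 + muL / real n)\<^sup>2 + (muL / real n)\<^sup>2 - 2 * (1 + muL / real n) * (muL / real n) * rho ^ n)
       + 2 * (sigmaL2 / real m) * var_D_hat
       - 2 * (sigmaL2 / real m - sigmaL2 / (real m)\<^sup>2) * (var_D_hat - sigmaD2 * (1 - rho ^ n) / (real n)\<^sup>2)"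
  proof -
    have "real m \<noteq> 0" "real n \<noteq> 0"
      using m n by simp_all
    have covariances:
      "expectation (\<lambda>\<omega>. L_hat_err (t - 1) \<omega> * L_hat_err t \<omega>) = sigmaL2 / real m - sigmaL2 / (real m)\<^sup>2"
      "expectation (\<lambda>\<omega>. D_hat_err (t - 1) \<omega> * D_hat_err t \<omega>) = var_D_hat - sigmaD2 * (1 - rho ^ n) / (real n)\<^sup>2"
      using L_hat_err_lag_covariance[of t] D_hat_err_lag_covariance[of t] by (simp_all add: mult.commute)
    \<comment> \<open>Every mixed term contains a factor \<open>E A\<^sub>s = 0\<close> or \<open>E B\<^sub>s = 0\<close>. What survives is
      \<open>\<mu>\<^sub>D\<^sup>2 E[(\<Delta>A)\<^sup>2] + E[W\<^sup>2] + E[A\<^sub>t\<^sup>2] E[B\<^sub>t\<^sup>2] + E[A\<^sub>t\<^sub>-\<^sub>1\<^sup>2] E[B\<^sub>t\<^sub>-\<^sub>1\<^sup>2] - 2 E[A\<^sub>t A\<^sub>t\<^sub>-\<^sub>1] E[B\<^sub>t B\<^sub>t\<^sub>-\<^sub>1]\<close>.\<close>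
    show ?thesis
      using lead_time_rv_integrable[OF lead_time_rv_L_hat_err] demand_rv_integrable[OF demand_rv_D_hat_err]
        demand_rv_integrable[OF demand_rv_fixed_lead_order_dev]
      by (simp add: lead_time_factor_def demand_factor_def prob_space L_hat_err_expectation
          D_hat_err_expectation fixed_lead_order_dev_expectation L_hat_err_second_moment
          L_hat_err_diff_second_moment L_hat_err_lag_covariance D_hat_err_second_moment
          D_hat_err_lag_covariance fixed_lead_order_dev_second_moment covariances)
         (use \<open>real m \<noteq> 0\<close> \<open>real n \<noteq> 0\<close> in \<open>simp add: field_simps power2_eq_square\<close>)
  qed
  finally show ?thesis .
qed

end

lemma bullwhip_ratio_identity:
  fixes r p v sL muD muL N K :: real
  assumes "v \<noteq> 0" "N \<noteq> 0" "K \<noteq> 0" "r \<noteq> 1"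
  defines "varD \<equiv> v * (N * (1 + r) / (1 - r) - 2 * r * (1 - p) / (1 - r)\<^sup>2) / N\<^sup>2"
  shows "(muD\<^sup>2 * (2 * sL / K\<^sup>2)
         + v * ((1 + muL / N)\<^sup>2 + (muL / N)\<^sup>2 - 2 * (1 + muL / N) * (muL / N) * p)
         + 2 * (sL / K) * varD - 2 * (sL / K - sL / K\<^sup>2) * (varD - v * (1 - p) / N\<^sup>2)) / v
    = 2 * sL / (N ^ 2 * K ^ 2) * (K * (1 - p) + N * (1 + r) / (1 - r) - (1 + r ^ 2) * (1 - p) / (1 - r) ^ 2)
      + 2 * sL * muD ^ 2 / (v * K ^ 2) + (2 * muL ^ 2 / N ^ 2 + 2 * muL / N) * (1 - p) + 1"
proof -
  define q where "q = 1 - r"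
  have "q \<noteq> 0" "r = 1 - q"
    using assms(4) by (simp_all add: q_def)
  then show ?thesis
    unfolding varD_def \<open>r = 1 - q\<close> using assms(1-3)
    by (simp add: field_simps) (simp add: algebra_simps eval_nat_numeral)
qed

theorem theorem1:
  fixes M :: "'a measure"
    and eps D :: "int \<Rightarrow> 'a \<Rightarrow> real"
    and L :: "int \<Rightarrow> 'a \<Rightarrow> nat"
    and muD rho sigma2 muL sigmaL2 TNS :: real
    and Lplus n m :: nat
  assumes P: "prob_space M"
    and rho: "-1 < rho" "rho < 1"
    and eps_rv: "\<And>t. eps t \<in> borel_measurable M"
    and eps_L2: "\<And>t. integrable M (\<lambda>\<omega>. (eps t \<omega>)\<^sup>2)"
    and eps_mean: "\<And>t. prob_space.expectation M (eps t) = 0"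
    and eps_var: "\<And>t. prob_space.variance M (eps t) = sigma2"
    and sigma2_pos: "0 < sigma2"
    and eps_id: "\<And>t. distr M borel (eps t) = distr M borel (eps 0)"
    and L_rv: "\<And>t. L t \<in> measurable M (count_space UNIV)"
    and L_range: "\<And>t \<omega>. \<omega> \<in> space M \<Longrightarrow> L t \<omega> \<le> Lplus"
    and L_id: "\<And>t. distr M (count_space UNIV) (L t) = distr M (count_space UNIV) (L 0)"
    and L_mean: "prob_space.expectation M (\<lambda>\<omega>. real (L 0 \<omega>)) = muL"
    and L_var: "prob_space.variance M (\<lambda>\<omega>. real (L 0 \<omega>)) = sigmaL2"
    and indep: "prob_space.indep_vars M (\<lambda>_. borel)
                  (\<lambda>i \<omega>. case i of Inl t \<Rightarrow> eps t \<omega> | Inr t \<Rightarrow> real (L t \<omega>)) UNIV"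
    and indep_LD: "prob_space.indep_set M
          (sigma_sets (space M) (\<Union>t. {(\<lambda>\<omega>. real (L t \<omega>)) -` A \<inter> space M | A. A \<in> sets borel}))
          (sigma_sets (space M) ((\<Union>t. {eps t -` A \<inter> space M | A. A \<in> sets borel})
                                  \<union> (\<Union>t. {D t -` A \<inter> space M | A. A \<in> sets borel})))"
    and AR1: "prob_space.stationary_AR1 M muD rho eps D"
    and n: "n \<ge> 1" and m: "m \<ge> 1"
  shows "(\<forall>t. prob_space.variance M (order_qty n m Lplus TNS D L t)
              = prob_space.variance M (order_qty n m Lplus TNS D L 0))
       \<and> (\<forall>t. prob_space.variance M (order_qty n m Lplus TNS D L t) / prob_space.variance M (D t)
           = 2 * sigmaL2 / (real n ^ 2 * real m ^ 2)
               * (real m * (1 - rho ^ n) + real n * (1 + rho) / (1 - rho)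
                  - (1 + rho ^ 2) * (1 - rho ^ n) / (1 - rho) ^ 2)
             + 2 * sigmaL2 * muD ^ 2 / ((sigma2 / (1 - rho ^ 2)) * real m ^ 2)
             + (2 * muL ^ 2 / real n ^ 2 + 2 * muL / real n) * (1 - rho ^ n) + 1)"
proof -
  interpret bullwhip_model M eps D L muD rho sigma2 muL sigmaL2 Lplus n m
    using P rho eps_rv eps_L2 eps_mean eps_var sigma2_pos L_rv L_range L_id L_mean L_var indep
      indep_LD AR1 n m
    by (intro bullwhip_model.intro bullwhip_model_axioms.intro)
  have "sigmaD2 \<noteq> 0" "real n \<noteq> 0" "real m \<noteq> 0" "rho \<noteq> 1"
    using sigmaD2_pos n m rho by simp_all
  note ratio = bullwhip_ratio_identity[OF this]
  show ?thesis
    unfolding order_qty_variance D_variance var_D_hat_def sigmaD2_eq[symmetric]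
    by (intro conjI allI refl ratio)
qed

end
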